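(* For the linear classification problem (estimating the margin $\max_{\|x\|\le1}\min_iA_ix$) and for the minimum enclosing ball problem (estimating $\min_x\max_i\|x-A_i\|^2$), there is no Las Vegas algorithm that reads an expected $o(M)$ entries of its input matrix and solves the problem to within a one-sided additive error of at most $1/2$. This holds even if $\|A_i\|=1$ for all rows $A_i$.
   Context: The input is an $n\times d$ real matrix $A$ with $M$ nonzero entries and rows of Euclidean norm at most $1$. A Las Vegas algorithm is a randomized algorithm whose output is always correct (never errs); its cost is the expected number of entries read. *)

theory Defs
  imports "HOL-Probability.Probability"
begin

text \<open>An input instance is a triple (n, d, A): an n x d real matrix given by its entry
  function A, with rows indexed by i < n and columns by j < d (entries outside are 0).\<close>
type_synonym input = "nat \<times> nat \<times> (nat \<Rightarrow> nat \<Rightarrow> real)"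

definition row_norm :: "nat \<Rightarrow> (nat \<Rightarrow> nat \<Rightarrow> real) \<Rightarrow> nat \<Rightarrow> real" where
  "row_norm d A i = sqrt (\<Sum>j<d. (A i j)^2)"

definition valid_input :: "input \<Rightarrow> bool" where
  "valid_input inp = (case inp of (n, d, A) \<Rightarrow>
      n \<ge> 1 \<and> (\<forall>i j. (n \<le> i \<or> d \<le> j) \<longrightarrow> A i j = 0) \<and> (\<forall>i<n. row_norm d A i = 1))"

definition nnz :: "input \<Rightarrow> nat" where
  "nnz inp = (case inp of (n, d, A) \<Rightarrow> card {(i, j). i < n \<and> j < d \<and> A i j \<noteq> 0})"

definition margin :: "input \<Rightarrow> real" where
  "margin inp = (case inp of (n, d, A) \<Rightarrow>
     Sup {Min ((\<lambda>i. \<Sum>j<d. A i j * x j) ` {..<n}) | x :: nat \<Rightarrow> real. (\<Sum>j<d. (x j)^2) \<le> 1})"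

definition meb :: "input \<Rightarrow> real" where
  "meb inp = (case inp of (n, d, A) \<Rightarrow>
     Inf {Max ((\<lambda>i. \<Sum>j<d. (x j - A i j)^2) ` {..<n}) | x :: nat \<Rightarrow> real. True})"

text \<open>A randomized entry-query algorithm: random seed w drawn from probability space W;
  on input inp it outputs out w inp after reading the set qry w inp of entries.\<close>
definition query_algorithm ::
  "'w measure \<Rightarrow> ('w \<Rightarrow> input \<Rightarrow> real) \<Rightarrow> ('w \<Rightarrow> input \<Rightarrow> (nat \<times> nat) set) \<Rightarrow> bool" where
  "query_algorithm W out qry =
     (prob_space W \<and>
      (\<forall>n d A. valid_input (n, d, A) \<longrightarrow>
         (\<lambda>w. real (card (qry w (n, d, A)))) \<in> borel_measurable W) \<and>
      (\<forall>w\<in>space W. \<forall>n d A. valid_input (n, d, A) \<longrightarrow> qry w (n, d, A) \<subseteq> {..<n} \<times> {..<d}) \<and>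
      (\<forall>w\<in>space W. \<forall>n d A B. valid_input (n, d, A) \<longrightarrow> valid_input (n, d, B) \<longrightarrow>
         (\<forall>(i, j)\<in>qry w (n, d, A). A i j = B i j) \<longrightarrow>
         out w (n, d, B) = out w (n, d, A) \<and> qry w (n, d, B) = qry w (n, d, A)))"

definition las_vegas_one_sided :: "'w measure \<Rightarrow> ('w \<Rightarrow> input \<Rightarrow> real) \<Rightarrow> (input \<Rightarrow> real) \<Rightarrow> bool" where
  "las_vegas_one_sided W out f =
     ((\<forall>w\<in>space W. \<forall>inp. valid_input inp \<longrightarrow> f inp - 1/2 \<le> out w inp \<and> out w inp \<le> f inp) \<or>
      (\<forall>w\<in>space W. \<forall>inp. valid_input inp \<longrightarrow> f inp \<le> out w inp \<and> out w inp \<le> f inp + 1/2))"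

definition expected_cost :: "'w measure \<Rightarrow> ('w \<Rightarrow> input \<Rightarrow> (nat \<times> nat) set) \<Rightarrow> input \<Rightarrow> ennreal" where
  "expected_cost W qry inp = (\<integral>\<^sup>+ w. ennreal (real (card (qry w inp))) \<partial>W)"

definition sublinear_cost :: "'w measure \<Rightarrow> ('w \<Rightarrow> input \<Rightarrow> (nat \<times> nat) set) \<Rightarrow> bool" where
  "sublinear_cost W qry =
     (\<forall>\<epsilon>>0. \<exists>M0. \<forall>inp. valid_input inp \<longrightarrow> nnz inp \<ge> M0 \<longrightarrow>
        expected_cost W qry inp \<le> ennreal (\<epsilon> * real (nnz inp)))"

end

theory Submission
  imports Defs
begin

text \<open>On the all-ones column the margin is 1 and the enclosing-ball radius is 0, while flipping
  the sign of any single entry makes the margin 0 and the radius 1. A seed that leaves some entry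
  unread answers identically on both inputs, which a one-sided error of at most 1/2 forbids; so
  every seed reads all M = n entries and the expected cost is M, not o(M).\<close>

definition ones_column :: "nat \<Rightarrow> nat \<Rightarrow> nat \<Rightarrow> real" where
  "ones_column n i j = (if i < n \<and> j = 0 then 1 else 0)"

definition flipped_column :: "nat \<Rightarrow> nat \<Rightarrow> nat \<Rightarrow> nat \<Rightarrow> real" where
  "flipped_column n k i j = (if i = k then - ones_column n i j else ones_column n i j)"

lemma valid_input_ones_column: "n \<ge> 1 \<Longrightarrow> valid_input (n, 1, ones_column n)"
  by (auto simp: valid_input_def ones_column_def row_norm_def)

lemma valid_input_flipped_column: "n \<ge> 1 \<Longrightarrow> valid_input (n, 1, flipped_column n k)"
  by (auto simp: valid_input_def flipped_column_def ones_column_def row_norm_def)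

lemma nnz_ones_column: "nnz (n, 1, ones_column n) = n"
proof -
  have "{(i, j). i < n \<and> j < (1::nat) \<and> ones_column n i j \<noteq> 0} = {..<n} \<times> {0}"
    by (auto simp: ones_column_def)
  then show ?thesis by (simp add: nnz_def)
qed

lemma other_index_exists:
  assumes "2 \<le> n" "(k::nat) < n"
  obtains k' where "k' < n" "k' \<noteq> k"
  using assms that[of 0] that[of 1] by fastforce

lemma row_values_ones_column:
  "n \<ge> 1 \<Longrightarrow> (\<lambda>i. g (ones_column n i 0)) ` {..<n} = {g 1}"
  by (auto simp: ones_column_def intro!: image_eqI[of _ _ 0])

lemma row_values_flipped_column:
  assumes "2 \<le> n" "k < n"
  shows "(\<lambda>i. g (flipped_column n k i 0)) ` {..<n} = {g (-1), g 1}"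
proof -
  obtain k' where k': "k' < n" "k' \<noteq> k" using other_index_exists assms by blast
  have "g (-1) = g (flipped_column n k k 0)" "g 1 = g (flipped_column n k k' 0)"
    using assms k' by (simp_all add: flipped_column_def ones_column_def)
  then show ?thesis
    using assms k' by (auto simp: flipped_column_def ones_column_def)
qed

lemma margin_ones_column:
  assumes "n \<ge> 1" shows "margin (n, 1, ones_column n) = 1"
proof -
  have "margin (n, 1, ones_column n) = Sup {x 0 | x :: nat \<Rightarrow> real. (x 0)^2 \<le> 1}"
    using row_values_ones_column[OF assms, of "\<lambda>a. a * _"] by (simp add: margin_def)
  also have "\<dots> = 1"
  proof (rule cSup_eq_maximum)
    show "1 \<in> {x 0 | x :: nat \<Rightarrow> real. (x 0)^2 \<le> 1}" by (auto intro: exI[of _ "\<lambda>_. 1"])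
  qed (auto simp: abs_square_le_1 dest: abs_le_D1)
  finally show ?thesis .
qed

lemma margin_flipped_column:
  assumes "2 \<le> n" "k < n" shows "margin (n, 1, flipped_column n k) = 0"
proof -
  have "margin (n, 1, flipped_column n k) =
      Sup {min (- x 0) (x 0) | x :: nat \<Rightarrow> real. (x 0)^2 \<le> 1}"
    using row_values_flipped_column[OF assms, of "\<lambda>a. a * _"] by (simp add: margin_def)
  also have "\<dots> = 0"
  proof (rule cSup_eq_maximum)
    show "0 \<in> {min (- x 0) (x 0) | x :: nat \<Rightarrow> real. (x 0)^2 \<le> 1}"
      by (auto intro: exI[of _ "\<lambda>_. 0"])
  qed auto
  finally show ?thesis .
qed

lemma meb_ones_column:
  assumes "n \<ge> 1" shows "meb (n, 1, ones_column n) = 0"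
proof -
  have "meb (n, 1, ones_column n) = Inf {(x 0 - 1)^2 | x :: nat \<Rightarrow> real. True}"
    using row_values_ones_column[OF assms, of "\<lambda>a. (_ - a)^2"] by (simp add: meb_def)
  also have "\<dots> = 0"
  proof (rule cInf_eq_minimum)
    show "0 \<in> {(x 0 - 1)^2 | x :: nat \<Rightarrow> real. True}" by (auto intro: exI[of _ "\<lambda>_. 1"])
  qed auto
  finally show ?thesis .
qed

lemma meb_flipped_column:
  assumes "2 \<le> n" "k < n" shows "meb (n, 1, flipped_column n k) = 1"
proof -
  have "meb (n, 1, flipped_column n k) =
      Inf {max ((x 0 + 1)^2) ((x 0 - 1)^2) | x :: nat \<Rightarrow> real. True}"
    using row_values_flipped_column[OF assms, of "\<lambda>a. (_ - a)^2"] by (simp add: meb_def)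
  also have "\<dots> = 1"
  proof (rule cInf_eq_minimum)
    show "1 \<in> {max ((x 0 + 1)^2) ((x 0 - 1)^2) | x :: nat \<Rightarrow> real. True}"
      by (auto intro: exI[of _ "\<lambda>_. 0"])
  next
    fix y assume "y \<in> {max ((x 0 + 1)^2) ((x 0 - 1)^2) | x :: nat \<Rightarrow> real. True}"
    then obtain t :: real where y: "y = max ((t + 1)^2) ((t - 1)^2)" by auto
    have "(t + 1)^2 + (t - 1)^2 = 2 + 2 * t^2" by (simp add: power2_eq_square algebra_simps)
    then show "1 \<le> y" unfolding y by (smt (verit) zero_le_power2)
  qed
  finally show ?thesis .
qed

lemma las_vegas_one_sided_separates:
  assumes lv: "las_vegas_one_sided W out f" and w: "w \<in> space W"
    and valid: "valid_input inp" "valid_input inp'" and gap: "\<bar>f inp - f inp'\<bar> > 1/2"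
  shows "out w inp \<noteq> out w inp'"
proof
  assume same: "out w inp = out w inp'"
  from lv show False
    unfolding las_vegas_one_sided_def
  proof (elim disjE)
    assume "\<forall>w\<in>space W. \<forall>inp. valid_input inp \<longrightarrow> f inp - 1/2 \<le> out w inp \<and> out w inp \<le> f inp"
    then have "f inp - 1/2 \<le> out w inp" "out w inp \<le> f inp"
        "f inp' - 1/2 \<le> out w inp'" "out w inp' \<le> f inp'"
      using w valid by blast+
    then show False using same gap by linarith
  next
    assume "\<forall>w\<in>space W. \<forall>inp. valid_input inp \<longrightarrow> f inp \<le> out w inp \<and> out w inp \<le> f inp + 1/2"
    then have "f inp \<le> out w inp" "out w inp \<le> f inp + 1/2"
        "f inp' \<le> out w inp'" "out w inp' \<le> f inp' + 1/2"
      using w valid by blast+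
    then show False using same gap by linarith
  qed
qed

lemma query_algorithm_reads_difference:
  assumes qa: "query_algorithm W out qry" and w: "w \<in> space W"
    and valid: "valid_input (n, d, A)" "valid_input (n, d, B)"
    and differ: "out w (n, d, A) \<noteq> out w (n, d, B)"
  shows "\<exists>(i, j)\<in>qry w (n, d, A). A i j \<noteq> B i j"
proof (rule ccontr)
  assume "\<not> (\<exists>(i, j)\<in>qry w (n, d, A). A i j \<noteq> B i j)"
  then have "\<forall>(i, j)\<in>qry w (n, d, A). A i j = B i j" by blast
  then have "out w (n, d, B) = out w (n, d, A)"
    using qa w valid unfolding query_algorithm_def by blast
  then show False using differ by simp
qed

lemma las_vegas_reads_ones_column:
  assumes qa: "query_algorithm W out qry" and lv: "las_vegas_one_sided W out f"
    and w: "w \<in> space W" and n: "n \<ge> 1"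
    and gap: "\<And>k. k < n \<Longrightarrow> \<bar>f (n, 1, ones_column n) - f (n, 1, flipped_column n k)\<bar> > 1/2"
  shows "qry w (n, 1, ones_column n) = {..<n} \<times> {..<1}"
proof
  have ones: "valid_input (n, 1, ones_column n)"
    using n by (rule valid_input_ones_column)
  then show "qry w (n, 1, ones_column n) \<subseteq> {..<n} \<times> {..<1}"
    using qa w unfolding query_algorithm_def by blast
  show "{..<n} \<times> {..<1} \<subseteq> qry w (n, 1, ones_column n)"
  proof
    fix p assume "p \<in> {..<n} \<times> {..<1::nat}"
    then obtain k where p: "p = (k, 0)" and k: "k < n" by auto
    have flipped: "valid_input (n, 1, flipped_column n k)"
      using n by (rule valid_input_flipped_column)
    have "out w (n, 1, ones_column n) \<noteq> out w (n, 1, flipped_column n k)"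
      using las_vegas_one_sided_separates[OF lv w ones flipped gap[OF k]] .
    then obtain i j' where "(i, j') \<in> qry w (n, 1, ones_column n)"
        and "ones_column n i j' \<noteq> flipped_column n k i j'"
      using query_algorithm_reads_difference[OF qa w ones flipped] by blast
    moreover from this(2) have "i = k" "j' = 0"
      by (auto simp: flipped_column_def ones_column_def split: if_splits)
    ultimately show "p \<in> qry w (n, 1, ones_column n)" using p by simp
  qed
qed

lemma not_sublinear_cost_if_reads_all_nonzeros:
  assumes W: "prob_space W"
    and reads_all: "\<And>M0. \<exists>inp. valid_input inp \<and> M0 \<le> nnz inp \<and> 0 < nnz inp \<and>
                       (\<forall>w\<in>space W. nnz inp \<le> card (qry w inp))"
  shows "\<not> sublinear_cost W qry"
proof
  assume "sublinear_cost W qry"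
  then obtain M0 where M0: "\<And>inp. valid_input inp \<Longrightarrow> M0 \<le> nnz inp \<Longrightarrow>
      expected_cost W qry inp \<le> ennreal (1/2 * real (nnz inp))"
    unfolding sublinear_cost_def by (meson half_gt_zero zero_less_one)
  obtain inp where inp: "valid_input inp" "M0 \<le> nnz inp" "0 < nnz inp"
    and card: "\<And>w. w \<in> space W \<Longrightarrow> nnz inp \<le> card (qry w inp)"
    using reads_all by blast
  have "ennreal (real (nnz inp)) = (\<integral>\<^sup>+ w. ennreal (real (nnz inp)) \<partial>W)"
    using prob_space.emeasure_space_1[OF W] by simp
  also have "\<dots> \<le> expected_cost W qry inp"
    unfolding expected_cost_def by (intro nn_integral_mono) (simp add: card)
  also have "\<dots> \<le> ennreal (1/2 * real (nnz inp))"
    using M0 inp by blast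
  finally show False
    using inp(3) by (simp add: ennreal_le_iff)
qed

lemma no_sublinear_las_vegas_if_flip_gap:
  assumes gap: "\<And>n k. 2 \<le> n \<Longrightarrow> k < n \<Longrightarrow>
      \<bar>f (n, 1, ones_column n) - f (n, 1, flipped_column n k)\<bar> > 1/2"
  shows "\<not> (\<exists>W out qry. query_algorithm W out qry \<and> las_vegas_one_sided W out f \<and>
                        sublinear_cost W qry)"
proof clarify
  fix W out qry
  assume qa: "query_algorithm W out qry" and lv: "las_vegas_one_sided W out f"
    and sublinear: "sublinear_cost W qry"
  have W: "prob_space W"
    using qa unfolding query_algorithm_def by blast
  have "\<exists>inp. valid_input inp \<and> M0 \<le> nnz inp \<and> 0 < nnz inp \<and>
      (\<forall>w\<in>space W. nnz inp \<le> card (qry w inp))" for M0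
  proof (intro exI conjI ballI)
    let ?n = "max M0 2"
    show "valid_input (?n, 1, ones_column ?n)" by (rule valid_input_ones_column) simp
    show "M0 \<le> nnz (?n, 1, ones_column ?n)" "0 < nnz (?n, 1, ones_column ?n)"
      by (simp_all add: nnz_ones_column del: One_nat_def)
    show "nnz (?n, 1, ones_column ?n) \<le> card (qry w (?n, 1, ones_column ?n))" if "w \<in> space W" for w
      using las_vegas_reads_ones_column[OF qa lv that _ gap]
      by (simp add: nnz_ones_column del: One_nat_def)
  qed
  then show False
    using not_sublinear_cost_if_reads_all_nonzeros[OF W] sublinear by blast
qed

theorem mainTheorem19:
  shows "\<not> (\<exists>(W :: 'w measure) out qry. query_algorithm W out qry \<and>
             las_vegas_one_sided W out margin \<and> sublinear_cost W qry)
       \<and> \<not> (\<exists>(W :: 'w measure) out qry. query_algorithm W out qry \<and>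
             las_vegas_one_sided W out meb \<and> sublinear_cost W qry)"
  by (intro conjI no_sublinear_las_vegas_if_flip_gap)
    (simp_all add: margin_ones_column margin_flipped_column meb_ones_column meb_flipped_column
      del: One_nat_def)

end
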